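(* Let $G=(V,E)$ be a transient graph that is connected, simple, and locally finite, with a fixed vertex $o$ and a fixed rotor mechanism $(m_x)_{x\in V}$. If $\rho_{\min}$ is a rotor configuration such that, for every vertex $x\in V$ and every outgoing edge $(x,y)$ of $x$, \[ w(\rho_{\min}(x))\leq w(x,y), \] then \[ \lim_{n\to\infty}\frac{I(\rho_{\min},n)}{n}=\alpha_G. \]
   Context: $G=(V,E)$ is connected, simple (no loops or multiple edges), locally finite, and $o\in V$ is a fixed vertex. For $x\in V$, $\mathcal{E}_x$ is the set of outgoing directed edges $(x,y)$ with $y$ a neighbor of $x$ (written $y\sim x$), and $\deg(x)=|\mathcal{E}_x|$. A rotor mechanism is a choice, for each $x$, of a bijection $m_x:\mathcal{E}_x\to\mathcal{E}_x$ having exactly one orbit. A rotor configuration is a map $\rho$ assigning to each $x\in V$ an edge $\rho(x)\in\mathcal{E}_x$. $\mathcal{G}(x)$ (the Green function) is the expected number of visits to $x$ by simple random walk on $G$ started at $o$ (finite since $G$ is transient). $\alpha_G$ is the probability that simple random walk started at $o$ never returns to $o$. Weight of a directed edge $(x,y)$: writing $(x,y_i):=m_x^i(x,y)$ (the edge obtained from $(x,y)$ by applying $m_x$ $i$ times), \[ w(x,y):=\frac{-1}{\deg(x)}\sum_{i=0}^{\deg(x)-1} i\,\frac{\mathcal{G}(y_{i+1})}{\deg(y_{i+1})}. \] Experiment: given an initial rotor configuration $\rho$ and $n\geq1$, define particle positions $X_t^{(0)},\dots,X_t^{(n-1)}$ and configurations $\rho_t$ for $t\ge 0$ by: $X_0^{(i)}=o$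 for all $i$ and $\rho_0=\rho$. Let $i_t:=t+1 \bmod n$. Particle $i$ is said to have returned to $o$ by time $t$ if $X_t^{(i)}=o$ and $X_s^{(i)}\neq o$ for some $s<t$. If particle $i_t$ has returned to $o$ by time $t$, then $\rho_{t+1}=\rho_t$ and $X_{t+1}^{(i)}=X_t^{(i)}$ for all $i$. Otherwise, $\rho_{t+1}(x)=m_x(\rho_t(x))$ if $x=X_t^{(i_t)}$ and $\rho_{t+1}(x)=\rho_t(x)$ otherwise; $X_{t+1}^{(i_t)}$ is the target vertex of the edge $\rho_{t+1}(X_t^{(i_t)})$, and $X_{t+1}^{(i)}=X_t^{(i)}$ for $i\neq i_t$. $I(\rho,n)$ denotes the number of particles $i\in\{0,\dots,n-1\}$ that never return to $o$. *)

theory Defs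
  imports Complex_Main
begin

(* Graph G = (V,E): vertices are the elements of the type 'v, edges given by a
   relation adj.  A directed edge (x,y) out of x is represented by its target y. *)

definition nbrs :: "('v \<Rightarrow> 'v \<Rightarrow> bool) \<Rightarrow> 'v \<Rightarrow> 'v set" where
  "nbrs adj x = {y. adj x y}"

definition deg :: "('v \<Rightarrow> 'v \<Rightarrow> bool) \<Rightarrow> 'v \<Rightarrow> nat" where
  "deg adj x = card (nbrs adj x)"

definition simple_graph :: "('v \<Rightarrow> 'v \<Rightarrow> bool) \<Rightarrow> bool" where
  "simple_graph adj \<longleftrightarrow> (\<forall>x. \<not> adj x x) \<and> (\<forall>x y. adj x y \<longrightarrow> adj y x)"

definition connected_graph :: "('v \<Rightarrow> 'v \<Rightarrow> bool) \<Rightarrow> bool" where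
  "connected_graph adj \<longleftrightarrow> (\<forall>x y. adj\<^sup>*\<^sup>* x y)"

definition locally_finite :: "('v \<Rightarrow> 'v \<Rightarrow> bool) \<Rightarrow> bool" where
  "locally_finite adj \<longleftrightarrow> (\<forall>x. finite (nbrs adj x))"

fun srw_prob :: "('v \<Rightarrow> 'v \<Rightarrow> bool) \<Rightarrow> nat \<Rightarrow> 'v \<Rightarrow> 'v \<Rightarrow> real" where
  "srw_prob adj 0 x y = (if x = y then 1 else 0)"
| "srw_prob adj (Suc n) x y =
     (\<Sum>z\<in>nbrs adj x. (1 / real (deg adj x)) * srw_prob adj n z y)"

definition green :: "('v \<Rightarrow> 'v \<Rightarrow> bool) \<Rightarrow> 'v \<Rightarrow> 'v \<Rightarrow> real" where
  "green adj v0 x = (\<Sum>n. srw_prob adj n v0 x)"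

definition transient :: "('v \<Rightarrow> 'v \<Rightarrow> bool) \<Rightarrow> 'v \<Rightarrow> bool" where
  "transient adj v0 \<longleftrightarrow> summable (\<lambda>n. srw_prob adj n v0 v0)"

(* avoid_prob adj v0 n x = probability that SRW started at x does not visit v0
   at any of the times 1,...,n *)
fun avoid_prob :: "('v \<Rightarrow> 'v \<Rightarrow> bool) \<Rightarrow> 'v \<Rightarrow> nat \<Rightarrow> 'v \<Rightarrow> real" where
  "avoid_prob adj v0 0 x = 1"
| "avoid_prob adj v0 (Suc n) x =
     (\<Sum>z\<in>nbrs adj x. (1 / real (deg adj x)) * (if z = v0 then 0 else avoid_prob adj v0 n z))"

(* alpha_G: probability that SRW started at v0 never returns to v0
   (limit of the decreasing sequence of probabilities of the events
   "no return up to time n") *)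
definition escape_prob :: "('v \<Rightarrow> 'v \<Rightarrow> bool) \<Rightarrow> 'v \<Rightarrow> real" where
  "escape_prob adj v0 = (INF n. avoid_prob adj v0 n v0)"

definition rotor_mechanism :: "('v \<Rightarrow> 'v \<Rightarrow> bool) \<Rightarrow> ('v \<Rightarrow> 'v \<Rightarrow> 'v) \<Rightarrow> bool" where
  "rotor_mechanism adj m \<longleftrightarrow>
     (\<forall>x. bij_betw (m x) (nbrs adj x) (nbrs adj x) \<and>
          (\<forall>y\<in>nbrs adj x. \<forall>z\<in>nbrs adj x. \<exists>i. (m x ^^ i) y = z))"

definition rotor_config :: "('v \<Rightarrow> 'v \<Rightarrow> bool) \<Rightarrow> ('v \<Rightarrow> 'v) \<Rightarrow> bool" where
  "rotor_config adj \<rho> \<longleftrightarrow> (\<forall>x. adj x (\<rho> x))"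

definition weight :: "('v \<Rightarrow> 'v \<Rightarrow> bool) \<Rightarrow> ('v \<Rightarrow> 'v \<Rightarrow> 'v) \<Rightarrow> 'v \<Rightarrow> 'v \<Rightarrow> 'v \<Rightarrow> real" where
  "weight adj m v0 x y =
     (- 1 / real (deg adj x)) *
     (\<Sum>i<deg adj x. real i * (green adj v0 ((m x ^^ Suc i) y) / real (deg adj ((m x ^^ Suc i) y))))"

(* State of the experiment at time t: (rotor configuration rho_t, positions X_t,
   flags L_t) where L_t i holds iff X_s^(i) \<noteq> v0 for some s \<le> t.
   Particle i has returned to v0 by time t iff X_t^(i) = v0 \<and> L_t i. *)
type_synonym 'v exp_state = "('v \<Rightarrow> 'v) \<times> (nat \<Rightarrow> 'v) \<times> (nat \<Rightarrow> bool)"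

definition exp_step :: "('v \<Rightarrow> 'v \<Rightarrow> 'v) \<Rightarrow> 'v \<Rightarrow> nat \<Rightarrow> nat \<Rightarrow> 'v exp_state \<Rightarrow> 'v exp_state" where
  "exp_step m v0 n t s =
     (case s of (\<rho>, X, L) \<Rightarrow>
        (let i = (t + 1) mod n in
         if X i = v0 \<and> L i then (\<rho>, X, L)
         else (let x = X i; \<rho>' = \<rho>(x := m x (\<rho> x)); y = \<rho>' x in
               (\<rho>', X(i := y), L(i := (L i \<or> y \<noteq> v0))))))"

fun exp_state :: "('v \<Rightarrow> 'v \<Rightarrow> 'v) \<Rightarrow> 'v \<Rightarrow> ('v \<Rightarrow> 'v) \<Rightarrow> nat \<Rightarrow> nat \<Rightarrow> 'v exp_state" where
  "exp_state m v0 \<rho> n 0 = (\<rho>, (\<lambda>_. v0), (\<lambda>_. False))"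
| "exp_state m v0 \<rho> n (Suc t) = exp_step m v0 n t (exp_state m v0 \<rho> n t)"

definition pos :: "('v \<Rightarrow> 'v \<Rightarrow> 'v) \<Rightarrow> 'v \<Rightarrow> ('v \<Rightarrow> 'v) \<Rightarrow> nat \<Rightarrow> nat \<Rightarrow> nat \<Rightarrow> 'v" where
  "pos m v0 \<rho> n t i = fst (snd (exp_state m v0 \<rho> n t)) i"

definition returned :: "('v \<Rightarrow> 'v \<Rightarrow> 'v) \<Rightarrow> 'v \<Rightarrow> ('v \<Rightarrow> 'v) \<Rightarrow> nat \<Rightarrow> nat \<Rightarrow> nat \<Rightarrow> bool" where
  "returned m v0 \<rho> n t i \<longleftrightarrow> pos m v0 \<rho> n t i = v0 \<and> (\<exists>s<t. pos m v0 \<rho> n s i \<noteq> v0)"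

definition escapes :: "('v \<Rightarrow> 'v \<Rightarrow> 'v) \<Rightarrow> 'v \<Rightarrow> ('v \<Rightarrow> 'v) \<Rightarrow> nat \<Rightarrow> nat" where
  "escapes m v0 \<rho> n = card {i. i < n \<and> (\<forall>t. \<not> returned m v0 \<rho> n t i)}"

end

theory Submission
  imports Defs "HOL-Combinatorics.Orbits"
begin

(* For a potential f on the vertices, the weight w_f of a rotor is built so that when a particle
   at x advances the rotor at x and moves to its new target, the change of
   f(particle) + w_f(rotor at x) is exactly the Laplacian of f at x.  Summing over all moves gives a
   conservation law.

   With f = G/deg, which is harmonic off the origin o, the Laplacian terms only count departures from
   o, at least n of them; since rho_min minimises every weight, the rotor term can only grow, and
   the law forces at most n (1 - alpha) particles to return: I(rho_min, n) >= alpha n.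

   Conversely take the truncated potential G_N/deg, which is finitely supported, so its rotor weights
   change by a bounded amount, uniformly in n.  Every vertex is left only finitely often, hence the
   particles that never return eventually sit outside the support; at most n departures from o
   occur, and the law yields I(rho_min, n)/n <= (1 - p_N(o,o))/G_N(o) + O(1/n).  The first term
   tends to 1/G(o) = alpha as N grows, by the renewal identity alpha G(o) = 1. *)

section \<open>Rotor orbits and rotor weights\<close>

lemma funpow_enumerates_single_orbit:
  assumes maps: "f ` S \<subseteq> S"
    and single_orbit: "\<forall>y\<in>S. \<forall>z\<in>S. \<exists>i. (f ^^ i) y = z"
    and y: "y \<in> S"
  shows "bij_betw (\<lambda>i. (f ^^ i) y) {..<card S} S" and "(f ^^ card S) y = y"
proof -
  obtain j where "(f ^^ j) (f y) = y"
    using single_orbit y maps by blast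
  then have "(f ^^ Suc j) y = y"
    by (simp only: funpow_Suc_right o_apply)
  then have y_orbit: "y \<in> orbit f y"
    unfolding orbit_altdef by (intro CollectI exI[of _ "Suc j"]) simp
  have "orbit f y \<subseteq> S"
    by (rule subsetI, erule orbit.induct) (use maps y in auto)
  moreover have "S \<subseteq> orbit f y"
  proof
    fix z assume "z \<in> S"
    then obtain i where "(f ^^ i) y = z" using single_orbit y by blast
    then show "z \<in> orbit f y" using funpow_in_orbit[OF y_orbit] by blast
  qed
  ultimately have S: "S = orbit f y" by blast
  have bij: "bij_betw (\<lambda>i. (f ^^ i) y) {0..<funpow_dist1 f y y} S"
    unfolding S bij_betw_def
    using orbit_conv_funpow_dist1[OF y_orbit] inj_on_funpow_dist1[OF y_orbit] by simp
  then have "card S = funpow_dist1 f y y"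
    by (simp flip: bij_betw_same_card)
  then show "bij_betw (\<lambda>i. (f ^^ i) y) {..<card S} S" "(f ^^ card S) y = y"
    using bij funpow_dist1_prop[OF y_orbit] by (simp_all add: atLeast0LessThan)
qed

definition laplacian :: "('v \<Rightarrow> 'v \<Rightarrow> bool) \<Rightarrow> ('v \<Rightarrow> real) \<Rightarrow> 'v \<Rightarrow> real" where
  "laplacian adj f x = (\<Sum>z\<in>nbrs adj x. f z) / real (deg adj x) - f x"

definition weight_wrt ::
    "('v \<Rightarrow> 'v \<Rightarrow> bool) \<Rightarrow> ('v \<Rightarrow> 'v \<Rightarrow> 'v) \<Rightarrow> ('v \<Rightarrow> real) \<Rightarrow> 'v \<Rightarrow> 'v \<Rightarrow> real" where
  "weight_wrt adj m f x y =
     (- 1 / real (deg adj x)) * (\<Sum>i<deg adj x. real i * f ((m x ^^ Suc i) y))"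

lemma weight_eq_weight_wrt:
  "weight adj m v0 x y = weight_wrt adj m (\<lambda>z. green adj v0 z / real (deg adj z)) x y"
  by (simp add: weight_def weight_wrt_def)

lemma sum_index_weighted_shift:
  fixes a :: "nat \<Rightarrow> real"
  assumes "a (Suc d) = a 1"
  shows "(\<Sum>i<d. real i * a (Suc (Suc i))) - (\<Sum>i<d. real i * a (Suc i))
         = real d * a 1 - (\<Sum>i<d. a (Suc i))"
proof -
  have "(\<Sum>i<Suc d. real i * a (Suc i)) = (\<Sum>i<d. real (Suc i) * a (Suc (Suc i)))"
    by (subst sum.lessThan_Suc_shift) simp
  also have "\<dots> = (\<Sum>i<d. real i * a (Suc (Suc i))) + (\<Sum>i<d. a (Suc (Suc i)))"
    by (simp add: algebra_simps sum.distrib)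
  finally have "(\<Sum>i<d. real i * a (Suc (Suc i))) + (\<Sum>i<d. a (Suc (Suc i)))
                = (\<Sum>i<d. real i * a (Suc i)) + real d * a (Suc d)"
    by simp
  moreover have "(\<Sum>i<d. a (Suc (Suc i))) + a 1 = (\<Sum>i<d. a (Suc i)) + a (Suc d)"
    using sum.lessThan_Suc_shift[of "\<lambda>i. a (Suc i)" d] by simp
  ultimately show ?thesis
    using assms by simp
qed

context
  fixes adj :: "'v \<Rightarrow> 'v \<Rightarrow> bool" and m :: "'v \<Rightarrow> 'v \<Rightarrow> 'v"
  assumes rotor: "rotor_mechanism adj m"
begin

lemma rotor_step_in_nbrs: "y \<in> nbrs adj x \<Longrightarrow> m x y \<in> nbrs adj x"
  using rotor by (auto simp: rotor_mechanism_def bij_betw_def)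

lemma rotor_orbit:
  assumes "y \<in> nbrs adj x"
  shows "bij_betw (\<lambda>i. (m x ^^ i) y) {..<deg adj x} (nbrs adj x)"
    and "(m x ^^ deg adj x) y = y"
  using funpow_enumerates_single_orbit[of "m x" "nbrs adj x" y] rotor assms
  by (auto simp: rotor_mechanism_def bij_betw_def deg_def)

lemma deg_pos_of_nbr: "y \<in> nbrs adj x \<Longrightarrow> 0 < deg adj x"
  using bij_betw_imp_surj_on[OF rotor_orbit(1)[of y x]] by (cases "deg adj x") auto

lemma sum_rotor_orbit:
  assumes "y \<in> nbrs adj x"
  shows "(\<Sum>i<deg adj x. g ((m x ^^ Suc i) y)) = (\<Sum>z\<in>nbrs adj x. g z)"
  using sum.reindex_bij_betw[OF rotor_orbit(1)[OF rotor_step_in_nbrs[OF assms]], of g]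
  by (simp add: funpow_swap1)

lemma weight_wrt_rotor_step:
  assumes y: "y \<in> nbrs adj x"
  shows "weight_wrt adj m f x (m x y) - weight_wrt adj m f x y
         = (\<Sum>z\<in>nbrs adj x. f z) / real (deg adj x) - f (m x y)"
proof -
  define d where "d = deg adj x"
  define a where "a j = f ((m x ^^ j) y)" for j
  have "0 < d" using deg_pos_of_nbr[OF y] by (simp add: d_def)
  have period: "a (Suc d) = a 1"
    using rotor_orbit(2)[OF y] by (simp add: a_def d_def funpow_swap1)
  have "weight_wrt adj m f x (m x y) - weight_wrt adj m f x y
        = (- 1 / real d) * ((\<Sum>i<d. real i * a (Suc (Suc i))) - (\<Sum>i<d. real i * a (Suc i)))"
    unfolding weight_wrt_def a_def d_def by (simp add: funpow_swap1 algebra_simps)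
  also have "\<dots> = (\<Sum>i<d. a (Suc i)) / real d - a 1"
    using \<open>0 < d\<close> by (simp add: sum_index_weighted_shift[OF period] field_simps)
  finally show ?thesis
    using sum_rotor_orbit[OF y, of f] by (simp add: a_def d_def)
qed

lemma abs_weight_wrt_le:
  assumes y: "y \<in> nbrs adj x"
  shows "\<bar>weight_wrt adj m f x y\<bar> \<le> (\<Sum>z\<in>nbrs adj x. \<bar>f z\<bar>)"
proof -
  define d where "d = deg adj x"
  have "0 < d" using deg_pos_of_nbr[OF y] by (simp add: d_def)
  have "\<bar>\<Sum>i<d. real i * f ((m x ^^ Suc i) y)\<bar> \<le> (\<Sum>i<d. real d * \<bar>f ((m x ^^ Suc i) y)\<bar>)"
    by (rule order_trans[OF sum_abs sum_mono]) (auto simp: abs_mult intro: mult_right_mono)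
  then have "\<bar>weight_wrt adj m f x y\<bar> \<le> (\<Sum>i<d. \<bar>f ((m x ^^ Suc i) y)\<bar>)"
    using \<open>0 < d\<close> by (simp add: weight_wrt_def d_def abs_mult field_simps flip: sum_distrib_left)
  then show ?thesis
    using sum_rotor_orbit[OF y, of "\<lambda>z. \<bar>f z\<bar>"] by (simp add: d_def)
qed

lemma weight_wrt_eq_0:
  assumes "y \<in> nbrs adj x" and "\<forall>z\<in>nbrs adj x. f z = 0"
  shows "weight_wrt adj m f x y = 0"
  using assms sum_rotor_orbit[OF assms(1), of "\<lambda>z. \<bar>f z\<bar>"] abs_weight_wrt_le[OF assms(1), of f]
  by simp

end

section \<open>Sequences\<close>

lemma renewal_limit_le:
  fixes u b :: "nat \<Rightarrow> real"
  assumes u: "summable u" "\<And>k. 0 \<le> u k"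
    and b: "decseq b" "\<And>k. 0 \<le> b k" "b \<longlonglongrightarrow> \<alpha>"
    and renewal: "\<And>n. (\<Sum>j\<le>n. u j * b (n - j)) = 1"
  shows "\<alpha> * suminf u \<le> 1"
proof -
  have "0 \<le> \<alpha>" using b by (intro LIMSEQ_le_const[OF b(3)]) auto
  have "\<alpha> * sum u {..<n} \<le> 1" for n
  proof -
    have "\<alpha> * sum u {..<n} \<le> \<alpha> * sum u {..n}"
      using \<open>0 \<le> \<alpha>\<close> u by (intro mult_left_mono sum_mono2) auto
    also have "\<dots> = (\<Sum>j\<le>n. u j * \<alpha>)"
      by (simp add: sum_distrib_left mult.commute)
    also have "\<dots> \<le> (\<Sum>j\<le>n. u j * b (n - j))"
      using u decseq_ge[OF b(1,3)] by (intro sum_mono mult_left_mono) auto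
    finally show ?thesis using renewal by simp
  qed
  then show ?thesis
    using suminf_le_const[OF summable_mult[OF u(1)], of \<alpha> 1] suminf_mult[OF u(1), of \<alpha>]
    by (simp add: sum_distrib_left)
qed

lemma renewal_limit_ge:
  fixes u b :: "nat \<Rightarrow> real"
  assumes u: "summable u" "\<And>k. 0 \<le> u k"
    and b: "decseq b" "\<And>k. 0 \<le> b k"
    and renewal: "\<And>n. (\<Sum>j\<le>n. u j * b (n - j)) = 1"
  shows "1 \<le> b M * suminf u"
proof -
  have "1 \<le> b M * suminf u + b 0 * (\<Sum>i<M. u (n - i))" if "M \<le> n" for n
  proof -
    have split: "{..n} = {..n - M} \<union> {n - M<..n}" using that by auto
    have "(\<Sum>j\<le>n - M. u j * b (n - j)) \<le> (\<Sum>j\<le>n - M. u j * b M)"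
      using u b(1) that by (intro sum_mono mult_left_mono) (auto simp: decseq_def)
    also have "\<dots> = b M * (\<Sum>j\<le>n - M. u j)"
      by (simp add: sum_distrib_left mult.commute)
    also have "\<dots> \<le> b M * suminf u"
      using u b by (intro mult_left_mono sum_le_suminf) auto
    finally have head: "(\<Sum>j\<le>n - M. u j * b (n - j)) \<le> b M * suminf u" .
    have "(\<Sum>j\<in>{n - M<..n}. u j * b (n - j)) \<le> (\<Sum>j\<in>{n - M<..n}. u j * b 0)"
      using u b(1) by (intro sum_mono mult_left_mono) (auto simp: decseq_def)
    also have "\<dots> = b 0 * (\<Sum>i<M. u (n - i))"
      by (simp add: sum_distrib_left mult.commute, rule sum.reindex_bij_witness[of _ "\<lambda>i. n - i" "\<lambda>j. n - j"])
         (use that in auto)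
    finally have tail: "(\<Sum>j\<in>{n - M<..n}. u j * b (n - j)) \<le> b 0 * (\<Sum>i<M. u (n - i))" .
    have "1 = (\<Sum>j\<le>n - M. u j * b (n - j)) + (\<Sum>j\<in>{n - M<..n}. u j * b (n - j))"
      unfolding renewal[of n, symmetric] split by (rule sum.union_disjoint) auto
    then show ?thesis using head tail by linarith
  qed
  moreover have "(\<lambda>n. \<Sum>i<M. u (n - i)) \<longlonglongrightarrow> 0"
  proof (rule tendsto_null_sum)
    show "(\<lambda>n. u (n - i)) \<longlonglongrightarrow> 0" for i
      by (rule LIMSEQ_offset[where k=i]) (simp add: summable_LIMSEQ_zero[OF u(1)])
  qed
  then have "(\<lambda>n. b M * suminf u + b 0 * (\<Sum>i<M. u (n - i))) \<longlonglongrightarrow> b M * suminf u + b 0 * 0"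
    by (intro tendsto_add tendsto_mult tendsto_const)
  ultimately show ?thesis
    by (intro LIMSEQ_le_const) auto
qed

lemma renewal_limit:
  fixes u b :: "nat \<Rightarrow> real"
  assumes u: "summable u" "\<And>k. 0 \<le> u k"
    and b: "decseq b" "\<And>k. 0 \<le> b k" "b \<longlonglongrightarrow> \<alpha>"
    and renewal: "\<And>n. (\<Sum>j\<le>n. u j * b (n - j)) = 1"
  shows "\<alpha> * suminf u = 1"
proof -
  have "1 \<le> \<alpha> * suminf u"
    using renewal_limit_ge[OF u b(1,2) renewal]
    by (intro LIMSEQ_le_const[OF tendsto_mult_right[OF b(3)]]) auto
  then show ?thesis
    using renewal_limit_le[OF u b renewal] by simp
qed

lemma LIMSEQ_squeeze_approx:
  fixes x a C :: "nat \<Rightarrow> real"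
  assumes lower: "\<And>n. 0 < n \<Longrightarrow> l \<le> x n"
    and upper: "\<And>N n. M \<le> N \<Longrightarrow> 0 < n \<Longrightarrow> x n \<le> a N + C N / real n"
    and approx: "a \<longlonglongrightarrow> l"
  shows "x \<longlonglongrightarrow> l"
proof (rule tendstoI)
  fix e :: real assume "0 < e"
  then have "eventually (\<lambda>N. a N < l + e / 2) sequentially"
    using order_tendstoD(2)[OF approx] by simp
  then obtain K where "\<forall>N\<ge>K. a N < l + e / 2"
    unfolding eventually_sequentially by blast
  then have N: "M \<le> max K M" "a (max K M) < l + e / 2" by simp_all
  have "eventually (\<lambda>n. C (max K M) / real n < e / 2) sequentially"
    using order_tendstoD(2)[OF lim_const_over_n] \<open>0 < e\<close> by simp
  moreover have "eventually (\<lambda>n. 0 < n) sequentially"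
    by (rule eventually_gt_at_top)
  ultimately show "eventually (\<lambda>n. dist (x n) l < e) sequentially"
  proof eventually_elim
    case (elim n)
    then have "x n - l < e"
      using upper[OF N(1), of n] N(2) by linarith
    then show ?case
      using lower[of n] elim by (simp add: dist_real_def)
  qed
qed

lemma mono_unit_steps_attains:
  fixes c :: "nat \<Rightarrow> nat"
  assumes "mono c" and "\<And>t. c (Suc t) \<le> Suc (c t)" and "c T \<le> v" and "v < c t"
  shows "\<exists>s\<ge>T. c s = v \<and> c (Suc s) = Suc v"
  using assms(4)
proof (induction t)
  case 0
  then show ?case using assms(1,3) monoD[OF assms(1), of 0 T] by simp
next
  case (Suc t)
  show ?case
  proof (cases "v < c t")
    case True
    then show ?thesis by (rule Suc.IH)
  next
    case False
    moreover have "T \<le> t"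
    proof (rule ccontr)
      assume "\<not> T \<le> t"
      then have "c (Suc t) \<le> c T" using monoD[OF assms(1)] by simp
      then show False using Suc.prems assms(3) by simp
    qed
    ultimately show ?thesis
      using Suc.prems assms(2)[of t] le_antisym by (intro exI[of _ t]) fastforce
  qed
qed

section \<open>Simple random walk\<close>

locale srw_graph =
  fixes adj :: "'v \<Rightarrow> 'v \<Rightarrow> bool" and v0 :: 'v
  assumes adj_sym: "adj x y \<Longrightarrow> adj y x"
    and finite_nbrs: "finite (nbrs adj x)"
    and nbrs_nonempty: "nbrs adj x \<noteq> {}"
    and connected: "adj\<^sup>*\<^sup>* x y"
begin

abbreviation p :: "nat \<Rightarrow> 'v \<Rightarrow> 'v \<Rightarrow> real" where
  "p \<equiv> srw_prob adj"

abbreviation dg :: "'v \<Rightarrow> real" where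
  "dg x \<equiv> real (deg adj x)"

declare srw_prob.simps(2)[simp del] avoid_prob.simps(2)[simp del]

lemma deg_pos: "0 < dg x"
  using finite_nbrs nbrs_nonempty by (simp add: deg_def card_gt_0_iff)

lemma sum_nbrs_const_div_deg: "(\<Sum>z\<in>nbrs adj x. c / dg x) = c"
  using deg_pos[of x] by (simp add: deg_def)

lemma srw_prob_bounds: "0 \<le> p k x y \<and> p k x y \<le> 1"
proof (induction k arbitrary: x)
  case (Suc k)
  have "(\<Sum>z\<in>nbrs adj x. 1 / dg x * p k z y) \<le> (\<Sum>z\<in>nbrs adj x. 1 / dg x)"
    using Suc deg_pos[of x] by (intro sum_mono) (simp add: divide_right_mono)
  then show ?case
    using Suc deg_pos[of x] sum_nbrs_const_div_deg[of 1 x]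
    by (auto intro: sum_nonneg simp: srw_prob.simps(2))
qed simp

lemma srw_prob_nonneg: "0 \<le> p k x y"
  using srw_prob_bounds by blast

lemma srw_prob_le_1: "p k x y \<le> 1"
  using srw_prob_bounds by blast

text \<open>By symmetry of \<open>adj\<close>, the last step of a path into \<open>y\<close> comes from a neighbour \<open>z\<close> of \<open>y\<close>
  with probability \<open>1 / deg z\<close>.\<close>

lemma srw_prob_Suc_last: "p (Suc k) x y = (\<Sum>z\<in>nbrs adj y. p k x z / dg z)"
proof (induction k arbitrary: x)
  case 0
  have "p (Suc 0) x y = (if adj x y then 1 / dg x else 0)"
    using finite_nbrs[of x] by (simp add: srw_prob.simps(2) nbrs_def if_distrib[of "\<lambda>t. _ * t"] sum.If_cases)
  moreover have "(\<Sum>z\<in>nbrs adj y. p 0 x z / dg z) = (if adj y x then 1 / dg x else 0)"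
    using finite_nbrs[of y] by (simp add: nbrs_def if_distrib[of "\<lambda>t. t / _"] sum.If_cases)
  ultimately show ?case
    using adj_sym by metis
next
  case (Suc k)
  have "p (Suc (Suc k)) x y = (\<Sum>z\<in>nbrs adj x. 1 / dg x * (\<Sum>w\<in>nbrs adj y. p k z w / dg w))"
    by (simp add: Suc srw_prob.simps(2)[of _ "Suc k"])
  also have "\<dots> = (\<Sum>w\<in>nbrs adj y. (\<Sum>z\<in>nbrs adj x. 1 / dg x * p k z w) / dg w)"
    by (simp add: sum_distrib_left sum_divide_distrib sum.swap[of _ "nbrs adj x"])
  also have "\<dots> = (\<Sum>w\<in>nbrs adj y. p (Suc k) x w / dg w)"
    by (simp add: srw_prob.simps(2))
  finally show ?case .
qed

lemma summable_srw_prob: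
  assumes "transient adj v0"
  shows "summable (\<lambda>k. p k v0 x)"
  using connected[of v0 x]
proof (induction rule: rtranclp_induct)
  case base
  then show ?case using assms by (simp add: transient_def)
next
  case (step z x)
  have "p k v0 x \<le> dg x * p (Suc k) v0 z" for k
  proof -
    have "p k v0 x / dg x \<le> (\<Sum>w\<in>nbrs adj z. p k v0 w / dg w)"
      using step(2) finite_nbrs srw_prob_nonneg deg_pos
      by (intro member_le_sum) (auto simp: nbrs_def)
    then show ?thesis
      using deg_pos[of x] by (simp add: srw_prob_Suc_last field_simps)
  qed
  moreover have "summable (\<lambda>k. dg x * p (Suc k) v0 z)"
    using step(3) summable_Suc_iff[where f="\<lambda>k. p k v0 z"] by (intro summable_mult) simp
  ultimately show ?case
    by (intro summable_comparison_test[of "\<lambda>k. p k v0 x" "\<lambda>k. dg x * p (Suc k) v0 z"])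
       (auto simp: srw_prob_nonneg)
qed

lemma green_harmonic:
  assumes tr: "transient adj v0"
  shows "green adj v0 x = (if x = v0 then 1 else 0) + (\<Sum>z\<in>nbrs adj x. green adj v0 z / dg z)"
proof -
  have "green adj v0 x = p 0 v0 x + (\<Sum>k. p (Suc k) v0 x)"
    using suminf_split_head[OF summable_srw_prob[OF tr, of x]] by (simp add: green_def)
  also have "(\<Sum>k. p (Suc k) v0 x) = (\<Sum>k. \<Sum>z\<in>nbrs adj x. p k v0 z / dg z)"
    by (simp add: srw_prob_Suc_last)
  also have "\<dots> = (\<Sum>z\<in>nbrs adj x. \<Sum>k. p k v0 z / dg z)"
    by (rule suminf_sum) (intro summable_divide summable_srw_prob[OF tr])
  also have "\<dots> = (\<Sum>z\<in>nbrs adj x. green adj v0 z / dg z)"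
    by (simp add: green_def suminf_divide[OF summable_srw_prob[OF tr]])
  finally show ?thesis by simp
qed

lemma laplacian_green:
  assumes "transient adj v0"
  shows "laplacian adj (\<lambda>z. green adj v0 z / dg z) x = - (if x = v0 then 1 else 0) / dg x"
  using green_harmonic[OF assms, of x] deg_pos[of x] by (simp add: laplacian_def field_simps)

lemma green_nonneg: "transient adj v0 \<Longrightarrow> 0 \<le> green adj v0 x"
  unfolding green_def by (intro suminf_nonneg summable_srw_prob) (auto simp: srw_prob_nonneg)

lemma one_le_green:
  assumes "transient adj v0"
  shows "1 \<le> green adj v0 v0"
proof -
  have "(\<Sum>k<1. p k v0 v0) \<le> green adj v0 v0"
    unfolding green_def by (intro sum_le_suminf summable_srw_prob assms) (auto simp: srw_prob_nonneg)
  then show ?thesis by simp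
qed

lemma avoid_prob_bounds: "0 \<le> avoid_prob adj v0 k x \<and> avoid_prob adj v0 k x \<le> 1"
proof (induction k arbitrary: x)
  case (Suc k)
  have "(\<Sum>z\<in>nbrs adj x. 1 / dg x * (if z = v0 then 0 else avoid_prob adj v0 k z))
        \<le> (\<Sum>z\<in>nbrs adj x. 1 / dg x)"
    using Suc deg_pos[of x] by (intro sum_mono) (simp add: divide_right_mono)
  then show ?case
    using Suc deg_pos[of x] sum_nbrs_const_div_deg[of 1 x]
    by (auto intro!: sum_nonneg simp: avoid_prob.simps(2))
qed simp

lemma decseq_avoid_prob: "decseq (\<lambda>k. avoid_prob adj v0 k x)"
proof -
  have "avoid_prob adj v0 (Suc k) x \<le> avoid_prob adj v0 k x" for k
  proof (induction k arbitrary: x)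
    case 0
    then show ?case using avoid_prob_bounds[of "Suc 0" x] by simp
  next
    case (Suc k)
    then show ?case
      using deg_pos[of x]
      by (simp add: avoid_prob.simps(2)[of _ _ "Suc k"] avoid_prob.simps(2)[of _ _ k]
          divide_right_mono sum_mono)
  qed
  then show ?thesis by (rule decseq_SucI)
qed

text \<open>Last-exit decomposition: up to time \<open>n\<close>, a walk from \<open>x\<close> either avoids \<open>v0\<close> at all
  times \<open>1, \<dots>, n\<close>, or it visits \<open>v0\<close> a last time \<open>j \<le> n\<close> (for \<open>x = v0\<close>, time \<open>0\<close> counts as
  a visit).\<close>

lemma avoid_prob_renewal:
  "(if x = v0 then 0 else avoid_prob adj v0 n x)
     + (\<Sum>j\<le>n. p j x v0 * avoid_prob adj v0 (n - j) v0) = 1"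
proof (induction n arbitrary: x)
  case (Suc n)
  have "(\<Sum>j\<le>n. p (Suc j) x v0 * avoid_prob adj v0 (n - j) v0)
        = (\<Sum>z\<in>nbrs adj x. 1 / dg x * (\<Sum>j\<le>n. p j z v0 * avoid_prob adj v0 (n - j) v0))"
    by (simp add: srw_prob.simps(2) sum_distrib_left sum_distrib_right mult.assoc sum.swap[of _ "{..n}"])
  also have "\<dots> = (\<Sum>z\<in>nbrs adj x. 1 / dg x * (1 - (if z = v0 then 0 else avoid_prob adj v0 n z)))"
    using eq_diff_eq'[THEN iffD2, OF Suc.IH[symmetric]] by simp
  also have "\<dots> = 1 - avoid_prob adj v0 (Suc n) x"
    using sum_nbrs_const_div_deg[of 1 x]
    by (simp add: avoid_prob.simps(2) right_diff_distrib sum_subtractf)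
  finally have "(\<Sum>j\<le>n. p (Suc j) x v0 * avoid_prob adj v0 (n - j) v0) = 1 - avoid_prob adj v0 (Suc n) x" .
  then show ?case
    by (subst sum.atMost_Suc_shift) auto
qed simp

lemma avoid_prob_tendsto: "(\<lambda>k. avoid_prob adj v0 k v0) \<longlonglongrightarrow> escape_prob adj v0"
  unfolding escape_prob_def
  by (rule LIMSEQ_decseq_INF[OF _ decseq_avoid_prob]) (use avoid_prob_bounds in \<open>auto intro: bdd_belowI[of _ 0]\<close>)

lemma escape_prob_mult_green:
  assumes "transient adj v0"
  shows "escape_prob adj v0 * green adj v0 v0 = 1"
proof -
  have "(\<Sum>j\<le>n. p j v0 v0 * avoid_prob adj v0 (n - j) v0) = 1" for n
    using avoid_prob_renewal[of v0 n] by simp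
  then show ?thesis
    unfolding green_def using avoid_prob_bounds
    by (intro renewal_limit[OF summable_srw_prob[OF assms] srw_prob_nonneg decseq_avoid_prob
          _ avoid_prob_tendsto]) auto
qed

definition green_trunc :: "nat \<Rightarrow> 'v \<Rightarrow> real" where
  "green_trunc N x = (\<Sum>k<N. p k v0 x)"

lemma green_trunc_nonneg: "0 \<le> green_trunc N x"
  unfolding green_trunc_def by (intro sum_nonneg srw_prob_nonneg)

lemma finite_srw_prob_support: "finite {x. p k v0 x \<noteq> 0}"
proof (induction k)
  case 0
  then show ?case by simp
next
  case (Suc k)
  have "{x. p (Suc k) v0 x \<noteq> 0} \<subseteq> (\<Union>z\<in>{x. p k v0 x \<noteq> 0}. nbrs adj z)"
  proof
    fix x assume "x \<in> {x. p (Suc k) v0 x \<noteq> 0}"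
    then obtain z where "z \<in> nbrs adj x" "p k v0 z \<noteq> 0"
      by (auto simp: srw_prob_Suc_last elim: sum.not_neutral_contains_not_neutral)
    then show "x \<in> (\<Union>z\<in>{x. p k v0 x \<noteq> 0}. nbrs adj z)"
      using adj_sym by (auto simp: nbrs_def)
  qed
  then show ?case
    using finite_UN_I[OF Suc finite_nbrs] by (rule finite_subset)
qed

lemma finite_green_trunc_support: "finite {x. green_trunc N x \<noteq> 0}"
proof -
  have "{x. green_trunc N x \<noteq> 0} \<subseteq> (\<Union>k<N. {x. p k v0 x \<noteq> 0})"
    by (auto simp: green_trunc_def elim: sum.not_neutral_contains_not_neutral)
  then show ?thesis
    using finite_UN_I[OF finite_lessThan finite_srw_prob_support] by (rule finite_subset)
qed

lemma finite_near_green_trunc_support: "finite {x. \<exists>z\<in>nbrs adj x. green_trunc N z \<noteq> 0}"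
proof -
  have "{x. \<exists>z\<in>nbrs adj x. green_trunc N z \<noteq> 0} \<subseteq> (\<Union>z\<in>{x. green_trunc N x \<noteq> 0}. nbrs adj z)"
    using adj_sym by (auto simp: nbrs_def)
  then show ?thesis
    using finite_UN_I[OF finite_green_trunc_support finite_nbrs] by (rule finite_subset)
qed

lemma laplacian_green_trunc:
  "laplacian adj (\<lambda>z. green_trunc N z / dg z) x = (p N v0 x - (if x = v0 then 1 else 0)) / dg x"
proof -
  have "(\<Sum>z\<in>nbrs adj x. green_trunc N z / dg z) = (\<Sum>k<N. p (Suc k) v0 x)"
    unfolding green_trunc_def
    by (simp add: srw_prob_Suc_last sum_divide_distrib sum.swap[of _ "nbrs adj x"])
  also have "\<dots> = green_trunc N x + p N v0 x - p 0 v0 x"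
    using sum_lessThan_telescope[of "\<lambda>k. p k v0 x" N] by (simp add: green_trunc_def sum_subtractf)
  finally show ?thesis
    by (simp add: laplacian_def diff_divide_distrib add_divide_distrib)
qed

lemma escape_ratio_tendsto:
  assumes tr: "transient adj v0"
  shows "(\<lambda>N. (1 - p N v0 v0) / green_trunc N v0) \<longlonglongrightarrow> escape_prob adj v0"
proof -
  have "(\<lambda>N. (1 - p N v0 v0) / green_trunc N v0) \<longlonglongrightarrow> (1 - 0) / green adj v0 v0"
    unfolding green_trunc_def green_def
    using summable_LIMSEQ_zero[OF summable_srw_prob[OF tr]] summable_LIMSEQ[OF summable_srw_prob[OF tr]]
      one_le_green[OF tr]
    by (intro tendsto_intros) (auto simp: green_def)
  moreover have "escape_prob adj v0 = 1 / green adj v0 v0"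
    using escape_prob_mult_green[OF tr] one_le_green[OF tr] by (simp add: eq_divide_eq)
  ultimately show ?thesis
    by simp
qed

lemma one_le_green_trunc: "1 \<le> N \<Longrightarrow> 1 \<le> green_trunc N v0"
  using sum_mono2[of "{..<N}" "{..<1}" "\<lambda>k. p k v0 v0"] by (simp add: green_trunc_def srw_prob_nonneg)

definition weight_bound :: "nat \<Rightarrow> real" where
  "weight_bound N = (\<Sum>x | \<exists>z\<in>nbrs adj x. green_trunc N z \<noteq> 0.
                       2 * (\<Sum>z\<in>nbrs adj x. green_trunc N z / dg z))"

lemma weight_change_le_weight_bound:
  fixes N :: nat
  assumes rotor: "rotor_mechanism adj m"
    and "\<And>x. \<rho> x \<in> nbrs adj x" and "\<And>x. \<rho>' x \<in> nbrs adj x" and "finite A"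
  defines "h \<equiv> \<lambda>z. green_trunc N z / dg z"
  shows "(\<Sum>x\<in>A. weight_wrt adj m h x (\<rho> x) - weight_wrt adj m h x (\<rho>' x)) \<le> weight_bound N"
proof -
  define B where "B = {x. \<exists>z\<in>nbrs adj x. green_trunc N z \<noteq> 0}"
  have h_nonneg: "0 \<le> h z" for z
    using green_trunc_nonneg deg_pos by (simp add: h_def)
  have "weight_wrt adj m h x (\<rho> x) - weight_wrt adj m h x (\<rho>' x)
        \<le> (if x \<in> B then 2 * (\<Sum>z\<in>nbrs adj x. h z) else 0)" for x
  proof (cases "x \<in> B")
    case True
    then show ?thesis
      using abs_weight_wrt_le[OF rotor assms(2)[of x], where f=h]
        abs_weight_wrt_le[OF rotor assms(3)[of x], where f=h]
      unfolding abs_le_iff by (simp add: abs_of_nonneg[OF h_nonneg])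
  next
    case False
    then show ?thesis
      using weight_wrt_eq_0[OF rotor assms(2)] weight_wrt_eq_0[OF rotor assms(3)] by (simp add: B_def h_def)
  qed
  then have "(\<Sum>x\<in>A. weight_wrt adj m h x (\<rho> x) - weight_wrt adj m h x (\<rho>' x))
             \<le> (\<Sum>x\<in>A. if x \<in> B then 2 * (\<Sum>z\<in>nbrs adj x. h z) else 0)"
    by (rule sum_mono)
  also have "\<dots> = (\<Sum>x\<in>A \<inter> B. 2 * (\<Sum>z\<in>nbrs adj x. h z))"
    using assms(4) by (simp add: sum.inter_restrict)
  also have "\<dots> \<le> (\<Sum>x\<in>B. 2 * (\<Sum>z\<in>nbrs adj x. h z))"
    using finite_near_green_trunc_support h_nonneg
    by (intro sum_mono2) (auto simp: B_def intro: sum_nonneg)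
  finally show ?thesis
    by (simp add: weight_bound_def B_def h_def)
qed

end

section \<open>The rotor walk experiment\<close>

locale rotor_walk = srw_graph adj v0 for adj :: "'v \<Rightarrow> 'v \<Rightarrow> bool" and v0 +
  fixes m :: "'v \<Rightarrow> 'v \<Rightarrow> 'v" and \<rho>0 :: "'v \<Rightarrow> 'v" and n :: nat
  assumes rotor_mech: "rotor_mechanism adj m" and init_config: "rotor_config adj \<rho>0"
    and loop_free: "\<not> adj x x" and n_pos: "0 < n"
begin

definition "state t = exp_state m v0 \<rho>0 n t"
definition "rotor t = fst (state t)"
definition "position t = fst (snd (state t))"
definition "departed t = snd (snd (state t))"
definition "active t = (t + 1) mod n"
definition "stopped t i \<longleftrightarrow> position t i = v0 \<and> departed t i"
definition "moves t \<longleftrightarrow> \<not> stopped t (active t)"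
definition "src t = position t (active t)"
definition "dst t = m (src t) (rotor t (src t))"

lemma state_Suc:
  "state (Suc t) =
     (if moves t then ((rotor t)(src t := dst t), (position t)(active t := dst t),
                       (departed t)(active t := (departed t (active t) \<or> dst t \<noteq> v0)))
      else state t)"
proof -
  obtain \<rho> X L where "state t = (\<rho>, X, L)" by (cases "state t") auto
  then show ?thesis
    by (simp add: state_def exp_step_def Let_def rotor_def position_def departed_def active_def
        stopped_def moves_def src_def dst_def)
qed

lemma rotor_Suc: "rotor (Suc t) x = (if moves t \<and> x = src t then dst t else rotor t x)"
  by (simp add: rotor_def state_Suc)

lemma position_Suc: "position (Suc t) i = (if moves t \<and> i = active t then dst t else position t i)"
  by (simp add: position_def state_Suc)

lemma departed_Suc:
  "departed (Suc t) i = (if moves t \<and> i = active t then departed t i \<or> dst t \<noteq> v0 else departed t i)"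
  by (simp add: departed_def state_Suc)

lemma state_0: "rotor 0 = \<rho>0" "position 0 = (\<lambda>_. v0)" "departed 0 = (\<lambda>_. False)"
  by (simp_all add: rotor_def position_def departed_def state_def)

lemma active_less: "active t < n"
  using n_pos by (simp add: active_def)

lemma rotor_in_nbrs: "rotor t x \<in> nbrs adj x"
proof (induction t)
  case 0
  then show ?case using init_config by (simp add: state_0 rotor_config_def nbrs_def)
next
  case (Suc t)
  then show ?case using rotor_step_in_nbrs[OF rotor_mech] by (auto simp: rotor_Suc dst_def)
qed

lemma dst_in_nbrs: "dst t \<in> nbrs adj (src t)"
  unfolding dst_def by (rule rotor_step_in_nbrs[OF rotor_mech rotor_in_nbrs])

lemma dst_ne_src: "dst t \<noteq> src t"
  using dst_in_nbrs[of t] loop_free[of "src t"] by (auto simp: nbrs_def)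

lemma departed_iff: "departed t i \<longleftrightarrow> (\<exists>s\<le>t. position s i \<noteq> v0)"
  by (induction t) (auto simp: state_0 departed_Suc position_Suc le_Suc_eq)

lemma departed_mono: "t \<le> t' \<Longrightarrow> departed t i \<Longrightarrow> departed t' i"
  unfolding departed_iff by (meson order_trans)

lemma returned_iff_stopped: "returned m v0 \<rho>0 n t i \<longleftrightarrow> stopped t i"
proof -
  have "pos m v0 \<rho>0 n s i = position s i" for s
    by (simp add: pos_def position_def state_def)
  then show ?thesis
    by (auto simp: returned_def stopped_def departed_iff le_less)
qed

lemma stopped_mono: "t \<le> t' \<Longrightarrow> stopped t i \<Longrightarrow> stopped t' i"
proof (induction rule: dec_induct)
  case (step t')
  then show ?case by (auto simp: stopped_def position_Suc departed_Suc moves_def)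
qed

lemma position_departed_unchanged:
  assumes "t \<le> t'" and "\<forall>s. t \<le> s \<and> s < t' \<longrightarrow> active s \<noteq> i"
  shows "position t' i = position t i \<and> departed t' i = departed t i"
  using assms by (induction rule: dec_induct) (auto simp: position_Suc departed_Suc)

lemma initial_moves: "s < n \<Longrightarrow> moves s \<and> src s = v0"
proof -
  assume "s < n"
  then have "\<forall>s'. 0 \<le> s' \<and> s' < s \<longrightarrow> active s' \<noteq> active s"
    by (auto simp: active_def mod_if)
  then show ?thesis
    using position_departed_unchanged[of 0 s "active s"]
    by (auto simp: state_0 moves_def stopped_def src_def)
qed

text \<open>A particle can leave \<open>v0\<close> only once, and arrive there only once: afterwards it is stopped.\<close>

lemma inj_on_active_departures_origin: "inj_on active {s. moves s \<and> src s = v0}"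
proof -
  have "active s \<noteq> active s'" if "s < s'" "moves s" "src s = v0" "moves s'" "src s' = v0" for s s'
  proof
    assume same: "active s = active s'"
    have "departed (Suc s) (active s)"
      using that(2,3) dst_ne_src[of s] by (simp add: departed_Suc)
    then have "departed s' (active s')"
      using that(1) same departed_mono[of "Suc s" s'] by simp
    then show False
      using that(4,5) by (simp add: moves_def stopped_def src_def)
  qed
  then show ?thesis
    by (intro inj_onI) (metis (mono_tags) mem_Collect_eq nat_neq_iff)
qed

lemma inj_on_active_arrivals_origin: "inj_on active {s. moves s \<and> dst s = v0}"
proof -
  have "active s \<noteq> active s'" if "s < s'" "moves s" "dst s = v0" "moves s'" for s s'
  proof
    assume same: "active s = active s'"
    have "departed s (active s)"
      using dst_ne_src[of s] that(3) by (auto simp: departed_iff src_def)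
    then have "stopped (Suc s) (active s)"
      using that(2,3) by (simp add: stopped_def position_Suc departed_Suc)
    then have "stopped s' (active s')"
      using that(1) same stopped_mono by (metis Suc_leI)
    then show False
      using that(4) by (simp add: moves_def)
  qed
  then show ?thesis
    by (intro inj_onI) (metis (mono_tags) mem_Collect_eq nat_neq_iff)
qed

lemma finite_departures_origin: "finite {s. moves s \<and> src s = v0}"
  using inj_on_active_departures_origin by (rule inj_on_finite[where B="{..<n}"]) (auto simp: active_less)

lemma finite_arrivals_origin: "finite {s. moves s \<and> dst s = v0}"
  using inj_on_active_arrivals_origin by (rule inj_on_finite[where B="{..<n}"]) (auto simp: active_less)

definition "departures x t = card {s. s < t \<and> moves s \<and> src s = x}"

lemma departures_Suc: "departures x (Suc t) = departures x t + (if moves t \<and> src t = x then 1 else 0)"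
proof -
  have "{s. s < Suc t \<and> moves s \<and> src s = x}
        = (if moves t \<and> src t = x then insert t else id) {s. s < t \<and> moves s \<and> src s = x}"
    by (auto simp: less_Suc_eq)
  then show ?thesis
    by (simp add: departures_def)
qed

lemma departures_0 [simp]: "departures x 0 = 0"
  by (simp add: departures_def)

lemma mono_departures: "mono (departures x)"
  by (rule incseq_SucI) (simp add: departures_Suc)

lemma departures_origin_le: "departures v0 t \<le> n"
proof -
  have "inj_on active {s. s < t \<and> moves s \<and> src s = v0}"
    by (rule inj_on_subset[OF inj_on_active_departures_origin]) auto
  then have "card {s. s < t \<and> moves s \<and> src s = v0} \<le> card {..<n}"
    by (rule card_inj_on_le) (auto simp: active_less)
  then show ?thesis
    by (simp add: departures_def)
qed

lemma departures_origin_ge: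
  assumes "n \<le> t"
  shows "n \<le> departures v0 t"
proof -
  have "card {..<n} \<le> card {s. s < t \<and> moves s \<and> src s = v0}"
    using initial_moves assms by (intro card_mono) auto
  then show ?thesis
    by (simp add: departures_def)
qed

lemma rotor_eq_funpow_departures: "rotor t x = (m x ^^ departures x t) (\<rho>0 x)"
  by (induction t) (auto simp: state_0 rotor_Suc departures_Suc dst_def)

lemma sum_position_Suc:
  fixes f :: "'v \<Rightarrow> real"
  shows "(\<Sum>i<n. f (position (Suc t) i))
     = (\<Sum>i<n. f (position t i)) + (if moves t then f (dst t) - f (src t) else 0)"
proof -
  have "(\<Sum>i<n. f (position (Suc t) i) - f (position t i))
        = (\<Sum>i<n. if i = active t then (if moves t then f (dst t) - f (src t) else 0) else 0)"
    by (intro sum.cong) (auto simp: position_Suc src_def)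
  also have "\<dots> = (if moves t then f (dst t) - f (src t) else 0)"
    using active_less by simp
  finally show ?thesis
    by (simp add: sum_subtractf)
qed

lemma sum_rotor_Suc:
  fixes g :: "'v \<Rightarrow> 'v \<Rightarrow> real"
  assumes "finite A" and "moves t \<Longrightarrow> src t \<in> A"
  shows "(\<Sum>x\<in>A. g x (rotor (Suc t) x))
           = (\<Sum>x\<in>A. g x (rotor t x)) + (if moves t then g (src t) (dst t) - g (src t) (rotor t (src t)) else 0)"
proof -
  have "(\<Sum>x\<in>A. g x (rotor (Suc t) x) - g x (rotor t x))
        = (\<Sum>x\<in>A. if x = src t then (if moves t then g (src t) (dst t) - g (src t) (rotor t (src t)) else 0) else 0)"
    by (intro sum.cong) (auto simp: rotor_Suc)
  also have "\<dots> = (if moves t then g (src t) (dst t) - g (src t) (rotor t (src t)) else 0)"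
    using assms by auto
  finally show ?thesis
    by (simp add: sum_subtractf)
qed

lemma sum_moves_Suc:
  fixes g :: "nat \<Rightarrow> real"
  shows "(\<Sum>s | s < Suc t \<and> moves s. g s) = (\<Sum>s | s < t \<and> moves s. g s) + (if moves t then g t else 0)"
proof -
  have "{s. s < Suc t \<and> moves s} = (if moves t then insert t else id) {s. s < t \<and> moves s}"
    by (auto simp: less_Suc_eq)
  then show ?thesis
    by simp
qed

lemma potential_balance:
  assumes "finite A" and "src ` {s. s < t \<and> moves s} \<subseteq> A"
  shows "(\<Sum>i<n. f (position t i)) + (\<Sum>x\<in>A. weight_wrt adj m f x (rotor t x))
         = real n * f v0 + (\<Sum>x\<in>A. weight_wrt adj m f x (\<rho>0 x))
           + (\<Sum>s | s < t \<and> moves s. laplacian adj f (src s))"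
  using assms(2)
proof (induction t)
  case 0
  then show ?case by (simp add: state_0)
next
  case (Suc t)
  have step: "f (dst t) - f (src t)
              + (weight_wrt adj m f (src t) (dst t) - weight_wrt adj m f (src t) (rotor t (src t)))
              = laplacian adj f (src t)"
    using weight_wrt_rotor_step[OF rotor_mech rotor_in_nbrs[of t "src t"], where f=f]
    by (simp add: dst_def laplacian_def)
  have sub: "src ` {s. s < t \<and> moves s} \<subseteq> A" and src_in: "moves t \<Longrightarrow> src t \<in> A"
    using Suc.prems by auto
  show ?case
    using Suc.IH[OF sub] step sum_moves_Suc[of "\<lambda>s. laplacian adj f (src s)" t] sum_position_Suc[of f t]
      sum_rotor_Suc[OF assms(1) src_in, where g="weight_wrt adj m f"]
    by simp
qed

end

section \<open>Every vertex is left finitely often\<close>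

context rotor_walk
begin

lemma next_turn:
  assumes i: "i < n" and "\<not> stopped t i"
  shows "\<exists>s\<ge>t. moves s \<and> active s = i \<and> src s = position t i"
proof -
  define c where "c = i + n * Suc t - 1"
  have "Suc t \<le> n * Suc t" using mult_le_mono1[of 1 n "Suc t"] n_pos by simp
  then have "Suc c = i + n * Suc t"
    by (simp add: c_def)
  then have "t \<le> c \<and> active c = i"
    using i \<open>Suc t \<le> n * Suc t\<close> unfolding active_def by (metis Suc_eq_plus1 Suc_le_mono le_add2 le_trans mod_less mod_mult_self2)
  define s where "s = (LEAST s. t \<le> s \<and> active s = i)"
  have first: "t \<le> s \<and> active s = i"
    unfolding s_def by (rule LeastI) fact
  have "\<forall>s'. t \<le> s' \<and> s' < s \<longrightarrow> active s' \<noteq> i"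
    unfolding s_def using not_less_Least by blast
  then have "position s i = position t i \<and> departed s i = departed t i"
    using position_departed_unchanged first by blast
  then show ?thesis
    using first assms(2) by (intro exI[of _ s]) (auto simp: moves_def stopped_def src_def)
qed

lemma departures_unbounded:
  assumes "\<exists>\<^sub>\<infinity>s. moves s \<and> src s = x"
  shows "\<exists>t. k < departures x t"
proof -
  obtain B where B: "finite B" "card B = Suc k" "B \<subseteq> {s. moves s \<and> src s = x}"
    using infinite_arbitrarily_large assms unfolding frequently_cofinite by blast
  then have "B \<subseteq> {s. s < Suc (Max B) \<and> moves s \<and> src s = x}"
    by (auto simp: le_imp_less_Suc)
  then have "card B \<le> departures x (Suc (Max B))"
    unfolding departures_def by (rule card_mono[rotated]) simp
  then show ?thesis
    using B(2) by (intro exI[of _ "Suc (Max B)"]) simp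
qed

lemma departure_with_count:
  assumes "\<exists>\<^sub>\<infinity>s. moves s \<and> src s = x" and "departures x T \<le> v"
  shows "\<exists>s\<ge>T. moves s \<and> src s = x \<and> departures x s = v"
proof -
  obtain t where "v < departures x t"
    using departures_unbounded[OF assms(1)] by blast
  moreover have "departures x (Suc t') \<le> Suc (departures x t')" for t'
    by (simp add: departures_Suc)
  ultimately obtain s where "s \<ge> T" "departures x s = v" "departures x (Suc s) = Suc v"
    using mono_unit_steps_attains[OF mono_departures _ assms(2)] by blast
  then show ?thesis
    by (auto simp: departures_Suc split: if_splits)
qed

text \<open>The rotor at \<open>x\<close> runs through all neighbours periodically.\<close>

lemma infinite_arrivals_if_infinite_departures:
  assumes inf: "\<exists>\<^sub>\<infinity>s. moves s \<and> src s = x" and y: "y \<in> nbrs adj x"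
  shows "\<exists>\<^sub>\<infinity>s. moves s \<and> dst s = y"
  unfolding cofinite_eq_sequentially frequently_sequentially
proof
  fix T
  define r d where "r = \<rho>0 x" and "d = deg adj x"
  have r: "r \<in> nbrs adj x"
    using init_config by (simp add: r_def rotor_config_def nbrs_def)
  obtain j where j: "(m x ^^ j) r = y"
    using rotor_mech r y unfolding rotor_mechanism_def by blast
  have "0 < d" and period: "(m x ^^ d) r = r"
    using deg_pos_of_nbr[OF rotor_mech r] rotor_orbit(2)[OF rotor_mech r] by (simp_all add: d_def)
  define v where "v = j + d * Suc (departures x T) - 1"
  have v: "departures x T \<le> v" "Suc v = j + d * Suc (departures x T)"
    using \<open>0 < d\<close> mult_le_mono1[of 1 d "Suc (departures x T)"] by (simp_all add: v_def)
  obtain s where s: "s \<ge> T" "moves s" "src s = x" "departures x s = v"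
    using departure_with_count[OF inf v(1)] by blast
  have "dst s = (m x ^^ Suc v) r"
    using s by (simp add: dst_def rotor_eq_funpow_departures r_def)
  also have "\<dots> = (m x ^^ j) r"
    using funpow_mod_eq[where f="m x" and x=r, OF period] v(2) by (metis mod_mult_self2)
  finally show "\<exists>s\<ge>T. moves s \<and> dst s = y"
    using s j by blast
qed

lemma infinite_departures_if_infinite_arrivals:
  assumes inf: "\<exists>\<^sub>\<infinity>s. moves s \<and> dst s = y" and "y \<noteq> v0"
  shows "\<exists>\<^sub>\<infinity>s. moves s \<and> src s = y"
  unfolding cofinite_eq_sequentially frequently_sequentially
proof
  fix T
  obtain s where s: "s \<ge> T" "moves s" "dst s = y"
    using inf unfolding cofinite_eq_sequentially frequently_sequentially by blast
  then have "position (Suc s) (active s) = y"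
    by (simp add: position_Suc)
  then obtain s' where "s' \<ge> Suc s" "moves s'" "src s' = y"
    using next_turn[OF active_less, of "Suc s" s] \<open>y \<noteq> v0\<close> by (auto simp: stopped_def)
  then show "\<exists>s'\<ge>T. moves s' \<and> src s' = y"
    using s(1) by (intro exI[of _ s']) auto
qed

text \<open>Otherwise, following a path to \<open>v0\<close>, the origin would be entered infinitely often, but
  each particle enters it at most once.\<close>

lemma finite_departures: "finite {s. moves s \<and> src s = x}"
  using connected[of x v0]
proof (induction rule: converse_rtranclp_induct)
  case base
  then show ?case by (rule finite_departures_origin)
next
  case (step x z)
  show ?case
  proof (rule ccontr)
    assume "infinite {s. moves s \<and> src s = x}"
    then have arrivals: "\<exists>\<^sub>\<infinity>s. moves s \<and> dst s = z"
      using step(1) by (intro infinite_arrivals_if_infinite_departures) (auto simp: frequently_cofinite nbrs_def)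
    show False
    proof (cases "z = v0")
      case True
      then show False
        using arrivals finite_arrivals_origin by (simp add: frequently_cofinite)
    next
      case False
      then show False
        using infinite_departures_if_infinite_arrivals[OF arrivals] step(3) by (simp add: frequently_cofinite)
    qed
  qed
qed

lemma eventually_not_stopped_outside:
  assumes "finite S"
  shows "eventually (\<lambda>t. \<forall>i<n. \<not> stopped t i \<longrightarrow> position t i \<notin> S) sequentially"
proof -
  have "finite (\<Union>x\<in>S. {s. moves s \<and> src s = x})"
    using assms finite_departures by blast
  then obtain T where T: "\<forall>s. moves s \<and> src s \<in> S \<longrightarrow> s \<le> T"
    unfolding finite_nat_set_iff_bounded_le by blast
  have "\<forall>i<n. \<not> stopped t i \<longrightarrow> position t i \<notin> S" if "Suc T \<le> t" for t
  proof (intro allI impI notI)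
    fix i assume "i < n" "\<not> stopped t i" "position t i \<in> S"
    then obtain s where "s \<ge> t" "moves s" "src s = position t i"
      using next_turn by blast
    then show False using T \<open>position t i \<in> S\<close> that by fastforce
  qed
  then show ?thesis
    unfolding eventually_sequentially by blast
qed

end

section \<open>Bounds on the number of escaping particles\<close>

context rotor_walk
begin

definition "escaping = {i. i < n \<and> (\<forall>t. \<not> stopped t i)}"
definition "returned_by t = {i. i < n \<and> stopped t i}"

lemma escapes_eq_card_escaping: "escapes m v0 \<rho>0 n = card escaping"
  by (simp add: escapes_def escaping_def returned_iff_stopped)

lemma card_escaping_add_le: "card escaping + card (returned_by t) \<le> n"
proof -
  have "card escaping + card (returned_by t) = card (escaping \<union> returned_by t)"
    by (rule card_Un_disjoint[symmetric]) (auto simp: escaping_def returned_by_def)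
  also have "\<dots> \<le> card {..<n}"
    by (rule card_mono) (auto simp: escaping_def returned_by_def)
  finally show ?thesis by simp
qed

lemma eventually_card_escaping_add: "eventually (\<lambda>t. card escaping + card (returned_by t) = n) sequentially"
proof -
  have "eventually (\<lambda>t. i \<in> escaping \<union> returned_by t) sequentially" if "i < n" for i
  proof (cases "\<exists>t0. stopped t0 i")
    case True
    then obtain t0 where t0: "stopped t0 i" by blast
    have "eventually (\<lambda>t. stopped t i) sequentially"
      using eventually_ge_at_top[of t0] by (rule eventually_mono) (use stopped_mono t0 in blast)
    then show ?thesis
      using that by (auto simp: returned_by_def elim: eventually_mono)
  next
    case False
    then show ?thesis
      using that by (simp add: escaping_def)
  qed
  then have "eventually (\<lambda>t. {..<n} \<subseteq> escaping \<union> returned_by t) sequentially"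
    by (auto simp: subset_eq intro: eventually_ball_finite)
  then show ?thesis
  proof (rule eventually_mono)
    fix t assume "{..<n} \<subseteq> escaping \<union> returned_by t"
    then have "n \<le> card (escaping \<union> returned_by t)"
      using card_mono[of "escaping \<union> returned_by t" "{..<n}"] by (simp add: escaping_def returned_by_def)
    then show "card escaping + card (returned_by t) = n"
      using card_Un_le[of escaping "returned_by t"] card_escaping_add_le[of t] by linarith
  qed
qed

lemma sum_position_split:
  fixes f :: "'v \<Rightarrow> real"
  shows "(\<Sum>i<n. f (position t i))
         = real (card (returned_by t)) * f v0 + (\<Sum>i | i < n \<and> \<not> stopped t i. f (position t i))"
proof -
  have "{..<n} = returned_by t \<union> {i. i < n \<and> \<not> stopped t i}"
    by (auto simp: returned_by_def)
  then have "(\<Sum>i<n. f (position t i))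
             = (\<Sum>i\<in>returned_by t. f (position t i)) + (\<Sum>i | i < n \<and> \<not> stopped t i. f (position t i))"
    by (simp only:) (rule sum.union_disjoint, auto simp: returned_by_def)
  also have "(\<Sum>i\<in>returned_by t. f (position t i)) = (\<Sum>i\<in>returned_by t. f v0)"
    by (rule sum.cong) (auto simp: returned_by_def stopped_def)
  finally show ?thesis
    by simp
qed

lemma sum_moves_supported_at_origin:
  fixes g :: "'v \<Rightarrow> real"
  assumes "\<And>x. x \<noteq> v0 \<Longrightarrow> g x = 0"
  shows "(\<Sum>s | s < t \<and> moves s. g (src s)) = real (departures v0 t) * g v0"
proof -
  have "(\<Sum>s | s < t \<and> moves s. g (src s)) = (\<Sum>s | s < t \<and> moves s. if src s = v0 then g v0 else 0)"
    using assms by (intro sum.cong) auto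
  also have "\<dots> = (\<Sum>s | s < t \<and> moves s \<and> src s = v0. g v0)"
    by (simp add: sum.inter_filter[symmetric] conj_assoc)
  finally show ?thesis
    by (simp add: departures_def)
qed

lemma card_returned_by_le:
  assumes tr: "transient adj v0"
    and wmin: "\<forall>x y. adj x y \<longrightarrow> weight adj m v0 x (\<rho>0 x) \<le> weight adj m v0 x y"
    and "n \<le> t"
  shows "real (card (returned_by t)) * green adj v0 v0 \<le> real n * (green adj v0 v0 - 1)"
proof -
  define h where "h = (\<lambda>z. green adj v0 z / dg z)"
  define A where "A = src ` {s. s < t \<and> moves s}"
  have balance: "(\<Sum>i<n. h (position t i)) + (\<Sum>x\<in>A. weight_wrt adj m h x (rotor t x))
                 = real n * h v0 + (\<Sum>x\<in>A. weight_wrt adj m h x (\<rho>0 x))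
                   + (\<Sum>s | s < t \<and> moves s. laplacian adj h (src s))"
    by (rule potential_balance) (auto simp: A_def)
  have "(\<Sum>s | s < t \<and> moves s. laplacian adj h (src s)) = real (departures v0 t) * (- 1 / dg v0)"
    using laplacian_green[OF tr] by (subst sum_moves_supported_at_origin) (simp_all add: h_def)
  also have "\<dots> \<le> real n * (- 1 / dg v0)"
    using departures_origin_ge[OF \<open>n \<le> t\<close>] deg_pos[of v0] by (intro mult_right_mono_neg) simp_all
  finally have lap: "(\<Sum>s | s < t \<and> moves s. laplacian adj h (src s)) \<le> real n * (- 1 / dg v0)" .
  have weights: "(\<Sum>x\<in>A. weight_wrt adj m h x (\<rho>0 x)) \<le> (\<Sum>x\<in>A. weight_wrt adj m h x (rotor t x))"
    using wmin rotor_in_nbrs by (intro sum_mono) (auto simp: weight_eq_weight_wrt h_def nbrs_def)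
  have "0 \<le> (\<Sum>i | i < n \<and> \<not> stopped t i. h (position t i))"
    using green_nonneg[OF tr] deg_pos by (auto simp: h_def intro!: sum_nonneg)
  then have "real (card (returned_by t)) * h v0 \<le> (\<Sum>i<n. h (position t i))"
    by (simp add: sum_position_split[of h])
  then have "real (card (returned_by t)) * h v0 \<le> real n * h v0 - real n / dg v0"
    using balance lap weights by simp
  then show ?thesis
    using deg_pos[of v0] by (simp add: h_def field_simps)
qed

lemma escape_fraction_ge:
  assumes tr: "transient adj v0"
    and wmin: "\<forall>x y. adj x y \<longrightarrow> weight adj m v0 x (\<rho>0 x) \<le> weight adj m v0 x y"
  shows "escape_prob adj v0 \<le> real (escapes m v0 \<rho>0 n) / real n"
proof -
  have "eventually (\<lambda>t. n \<le> t \<and> card escaping + card (returned_by t) = n) sequentially"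
    by (intro eventually_conj eventually_ge_at_top eventually_card_escaping_add)
  then obtain t where t: "n \<le> t" "card escaping + card (returned_by t) = n"
    unfolding eventually_sequentially by blast
  define G where "G = green adj v0 v0"
  have "real (card escaping) = real n - real (card (returned_by t))"
    using arg_cong[OF t(2), of real] by simp
  moreover have "real n \<le> (real n - real (card (returned_by t))) * G"
    using card_returned_by_le[OF tr wmin t(1)] by (simp add: G_def algebra_simps)
  ultimately have "real n \<le> real (card escaping) * G"
    by simp
  moreover have "escape_prob adj v0 = 1 / G" and "1 \<le> G"
    using escape_prob_mult_green[OF tr] one_le_green[OF tr] by (simp_all add: G_def eq_divide_eq)
  ultimately have "real n * escape_prob adj v0 \<le> real (card escaping)"
    by (simp add: pos_divide_le_eq)
  then show ?thesis
    using n_pos by (simp add: escapes_eq_card_escaping field_simps)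
qed

lemma sum_laplacian_green_trunc_ge:
  fixes N t :: nat
  defines "f \<equiv> \<lambda>z. green_trunc N z / dg z"
  shows "real n * ((p N v0 v0 - 1) / dg v0) \<le> (\<Sum>s | s < t \<and> moves s. laplacian adj f (src s))"
proof -
  have off_origin: "(if x = v0 then laplacian adj f v0 else 0) \<le> laplacian adj f x" for x
    using laplacian_green_trunc[of N x] srw_prob_nonneg[of N v0 x] deg_pos[of x]
    by (cases "x = v0") (simp_all add: f_def)
  have "real n * ((p N v0 v0 - 1) / dg v0) \<le> real (departures v0 t) * ((p N v0 v0 - 1) / dg v0)"
    using departures_origin_le[of t] srw_prob_le_1[of N v0 v0] deg_pos[of v0]
    by (intro mult_right_mono_neg) (simp_all add: divide_nonpos_pos)
  also have "\<dots> = (\<Sum>s | s < t \<and> moves s. if src s = v0 then laplacian adj f v0 else 0)"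
    using sum_moves_supported_at_origin[of "\<lambda>x. if x = v0 then laplacian adj f v0 else 0" t]
    by (simp add: laplacian_green_trunc f_def)
  also have "\<dots> \<le> (\<Sum>s | s < t \<and> moves s. laplacian adj f (src s))"
    using off_origin by (intro sum_mono) simp
  finally show ?thesis .
qed

lemma card_returned_by_ge:
  "eventually (\<lambda>t. real n * (green_trunc N v0 - (1 - p N v0 v0)) - weight_bound N * dg v0
                   \<le> real (card (returned_by t)) * green_trunc N v0) sequentially"
  using eventually_not_stopped_outside[OF finite_green_trunc_support[of N]]
proof (rule eventually_mono)
  fix t assume outside: "\<forall>i<n. \<not> stopped t i \<longrightarrow> position t i \<notin> {x. green_trunc N x \<noteq> 0}"
  define f where "f = (\<lambda>z. green_trunc N z / dg z)"
  define A where "A = src ` {s. s < t \<and> moves s}"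
  have balance: "(\<Sum>i<n. f (position t i)) + (\<Sum>x\<in>A. weight_wrt adj m f x (rotor t x))
                 = real n * f v0 + (\<Sum>x\<in>A. weight_wrt adj m f x (\<rho>0 x))
                   + (\<Sum>s | s < t \<and> moves s. laplacian adj f (src s))"
    by (rule potential_balance) (auto simp: A_def)
  have "(\<Sum>i | i < n \<and> \<not> stopped t i. f (position t i)) = 0"
    using outside by (intro sum.neutral) (auto simp: f_def)
  then have positions: "(\<Sum>i<n. f (position t i)) = real (card (returned_by t)) * f v0"
    by (simp add: sum_position_split[of f])
  have "(\<Sum>x\<in>A. weight_wrt adj m f x (rotor t x) - weight_wrt adj m f x (\<rho>0 x)) \<le> weight_bound N"
    unfolding f_def using init_config
    by (intro weight_change_le_weight_bound rotor_mech rotor_in_nbrs) (auto simp: A_def rotor_config_def nbrs_def)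
  then have weights: "(\<Sum>x\<in>A. weight_wrt adj m f x (rotor t x)) - (\<Sum>x\<in>A. weight_wrt adj m f x (\<rho>0 x))
                      \<le> weight_bound N"
    by (simp add: sum_subtractf)
  have lap: "real n * ((p N v0 v0 - 1) / dg v0) \<le> (\<Sum>s | s < t \<and> moves s. laplacian adj f (src s))"
    unfolding f_def by (rule sum_laplacian_green_trunc_ge)
  have "real n * f v0 + real n * ((p N v0 v0 - 1) / dg v0) - weight_bound N
        \<le> real (card (returned_by t)) * f v0"
    using balance positions weights lap by linarith
  then have "dg v0 * (real n * (green_trunc N v0 - (1 - p N v0 v0)) - weight_bound N * dg v0)
             \<le> dg v0 * (real (card (returned_by t)) * green_trunc N v0)"
    using deg_pos[of v0] by (simp add: f_def field_simps)
  then show "real n * (green_trunc N v0 - (1 - p N v0 v0)) - weight_bound N * dg v0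
             \<le> real (card (returned_by t)) * green_trunc N v0"
    using mult_le_cancel_left_pos[OF deg_pos[of v0]] by blast
qed

lemma escape_fraction_le:
  assumes "1 \<le> N"
  shows "real (escapes m v0 \<rho>0 n) / real n
         \<le> (1 - p N v0 v0) / green_trunc N v0 + weight_bound N * dg v0 / green_trunc N v0 / real n"
proof -
  obtain t where t: "real n * (green_trunc N v0 - (1 - p N v0 v0)) - weight_bound N * dg v0
                     \<le> real (card (returned_by t)) * green_trunc N v0"
    using eventually_happens'[OF _ card_returned_by_ge] by auto
  have "real (card escaping) \<le> real n - real (card (returned_by t))"
    using card_escaping_add_le[of t] by linarith
  then have "real (card escaping) * green_trunc N v0
             \<le> (real n - real (card (returned_by t))) * green_trunc N v0"
    using green_trunc_nonneg by (intro mult_right_mono) auto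
  then have "real (card escaping) * green_trunc N v0 \<le> real n * (1 - p N v0 v0) + weight_bound N * dg v0"
    using t by (simp add: algebra_simps)
  then have "real (card escaping) \<le> (real n * (1 - p N v0 v0) + weight_bound N * dg v0) / green_trunc N v0"
    using one_le_green_trunc[OF assms] by (simp add: pos_le_divide_eq)
  then have "real (card escaping) / real n
             \<le> (real n * (1 - p N v0 v0) + weight_bound N * dg v0) / green_trunc N v0 / real n"
    by (rule divide_right_mono) simp
  also have "\<dots> = (1 - p N v0 v0) / green_trunc N v0 + weight_bound N * dg v0 / green_trunc N v0 / real n"
    using n_pos by (simp add: add_divide_distrib)
  finally show ?thesis
    by (simp add: escapes_eq_card_escaping)
qed

end

theorem theorem1p1:
  fixes adj :: "'v \<Rightarrow> 'v \<Rightarrow> bool" and v0 :: 'v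
    and m :: "'v \<Rightarrow> 'v \<Rightarrow> 'v" and \<rho>min :: "'v \<Rightarrow> 'v"
  assumes "simple_graph adj" and "connected_graph adj" and "locally_finite adj"
    and "transient adj v0"
    and "rotor_mechanism adj m"
    and "rotor_config adj \<rho>min"
    and "\<forall>x y. adj x y \<longrightarrow> weight adj m v0 x (\<rho>min x) \<le> weight adj m v0 x y"
  shows "(\<lambda>n. real (escapes m v0 \<rho>min n) / real n) \<longlonglongrightarrow> escape_prob adj v0"
proof -
  interpret srw_graph adj v0
    using assms(1-3,6) by unfold_locales
      (auto simp: simple_graph_def connected_graph_def locally_finite_def rotor_config_def nbrs_def)
  have walk: "rotor_walk adj m \<rho>min n" if "0 < n" for n
    using assms(1,5,6) that by unfold_locales (auto simp: simple_graph_def)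
  show ?thesis
    using rotor_walk.escape_fraction_ge[OF walk assms(4,7)] rotor_walk.escape_fraction_le[OF walk]
    by (intro LIMSEQ_squeeze_approx[where M=1, OF _ _ escape_ratio_tendsto[OF assms(4)]])
qed

end
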